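(* For any positive integer $n$, define \[ S(n;t,y;q) := 1 + \sum_{j \geq 1} \left( t\, \overline{{ n-1 \brack j-1 }}_{q,t} \frac{(-tyq;q)_{j-1}}{(yq;q)_{j-1}} y^j q^{j^2} + \overline{{ n \brack j }}_{q,t} \frac{(-tyq;q)_{j}}{(yq;q)_{j}} y^j q^{j^2} \right). \] Then \[ S(n;t,y;q)= \frac{(-tyq;q)_{n}}{(yq;q)_{n}}. \]
   Context: An overpartition is a partition in which the last occurrence of each distinct part size may be overlined; its weight $|\lambda|$ is the sum of its parts. For integers $0\le b\le a$, $\overline{{a \brack b}}_{q,t}=\sum_{\lambda} t^{\#_o(\lambda)} q^{|\lambda|}$, the sum over all overpartitions $\lambda$ with largest part at most $a-b$ and at most $b$ parts, $\#_o(\lambda)$ being the number of overlined parts; for other integer pairs $(a,b)$ (e.g. $b>a$) it is $0$, so the sum defining $S$ is finite. $(x;q)_k=\prod_{j=1}^k(1-xq^{j-1})$, $(x;q)_0=1$. *)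

theory Defs
  imports Main "HOL-Library.Multiset"
begin

text \<open>An overpartition is encoded as a pair (M, V): M is the multiset of parts
  (positive naturals), O is the set of part sizes whose last occurrence is overlined
  (so O is a subset of the distinct parts of M).\<close>

definition overpartitions_in_box :: "nat \<Rightarrow> nat \<Rightarrow> (nat multiset \<times> nat set) set" where
  "overpartitions_in_box L k =
     {(M, V). (\<forall>x\<in>#M. 0 < x \<and> x \<le> L) \<and> size M \<le> k \<and> V \<subseteq> set_mset M}"

definition over_qbinom :: "nat \<Rightarrow> nat \<Rightarrow> 'a::comm_ring_1 \<Rightarrow> 'a \<Rightarrow> 'a" where
  "over_qbinom a b q t =
     (if b \<le> a then
        (\<Sum>p\<in>overpartitions_in_box (a - b) b. t ^ card (snd p) * q ^ sum_mset (fst p))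
      else 0)"

definition qpoch :: "'a::comm_ring_1 \<Rightarrow> 'a \<Rightarrow> nat \<Rightarrow> 'a" where
  "qpoch x q k = (\<Prod>i<k. 1 - x * q ^ i)"

text \<open>S(n;t,y;q).  The sum over j \<ge> 1 is finite: for j > n both over_qbinom terms vanish,
  so summing over 1..n is the same sum.\<close>
definition S :: "nat \<Rightarrow> 'a::field \<Rightarrow> 'a \<Rightarrow> 'a \<Rightarrow> 'a" where
  "S n t y q = 1 + (\<Sum>j\<in>{1..n}.
      t * over_qbinom (n - 1) (j - 1) q t * qpoch (- t * y * q) q (j - 1) / qpoch (y * q) q (j - 1)
        * y ^ j * q ^ (j ^ 2)
      + over_qbinom n j q t * qpoch (- t * y * q) q j / qpoch (y * q) q j * y ^ j * q ^ (j ^ 2))"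

end

theory Submission
  imports Defs
begin

text \<open>Write a_k(y) = (-tyq;q)_k / (yq;q)_k, so that a_{k+1}(y) = a_1(y) a_k(yq); it suffices to
  show S(n+1; y) = a_1(y) S(n; yq) and induct on n. Removing the first column of the Ferrers
  diagram gives the Pascal-type recurrence [a+2, b+1] = [a+1, b] + q^{b+1} ([a+1, b+1] + t [a, b])
  for the overpartition Gaussian coefficients, the factor t accounting for an overlined part 1.
  Together with a_{k+1} = a_k + y q^{k+1} (a_{k+1} + t a_k), it makes the j-th summand of
  a_1(y) S(n; yq) agree with the j-th summand of S(n+1; y) up to a telescoping remainder.\<close>

lemma mem_overpartitions_in_box:
  "(M, V) \<in> overpartitions_in_box L k \<longleftrightarrow>
     (\<forall>x\<in>#M. 0 < x \<and> x \<le> L) \<and> size M \<le> k \<and> V \<subseteq> set_mset M"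
  by (simp add: overpartitions_in_box_def)

lemma overpartitions_in_box_0_left: "overpartitions_in_box 0 k = {({#}, {})}"
  by (auto simp: overpartitions_in_box_def) (metis multiset_nonemptyE not_gr0)

lemma overpartitions_in_box_0_right: "overpartitions_in_box L 0 = {({#}, {})}"
  by (auto simp: overpartitions_in_box_def)

lemma finite_overpartitions_in_box: "finite (overpartitions_in_box L k)"
proof -
  have "overpartitions_in_box L k \<subseteq> {M. set_mset M \<subseteq> {..L} \<and> size M \<le> k} \<times> Pow {..L}"
    by (auto simp: overpartitions_in_box_def)
  moreover have "{M. set_mset M \<subseteq> {..L} \<and> size M \<le> k} = (\<Union>n\<le>k. multisets_of_size {..L} n)"
    by (auto simp: multisets_of_size_def)
  then have "finite {M. set_mset M \<subseteq> {..L} \<and> size M \<le> k}"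
    by auto
  ultimately show ?thesis by (rule finite_subset[OF _ finite_SigmaI]) auto
qed

text \<open>Adds a first column of height k to the Ferrers diagram; b overlines the last part 1.\<close>
definition add_column :: "nat \<Rightarrow> bool \<Rightarrow> nat multiset \<times> nat set \<Rightarrow> nat multiset \<times> nat set" where
  "add_column k b = (\<lambda>(M, V).
     (image_mset Suc M + replicate_mset (k - size M) 1, if b then insert 1 (Suc ` V) else Suc ` V))"

definition remove_column :: "nat multiset \<times> nat set \<Rightarrow> nat multiset \<times> nat set" where
  "remove_column = (\<lambda>(M, V). (image_mset (\<lambda>x. x - 1) (filter_mset (\<lambda>x. 1 < x) M), (\<lambda>x. x - 1) ` (V - {1})))"

lemma remove_add_column:
  assumes "p \<in> overpartitions_in_box L k'"
  shows "remove_column (add_column k b p) = p"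
proof -
  obtain M V where p: "p = (M, V)" "\<forall>x\<in>#M. 0 < x" "0 \<notin> V"
    using assms by (cases p) (auto simp: mem_overpartitions_in_box)
  have "filter_mset (\<lambda>x. 1 < x) (image_mset Suc M) = image_mset Suc M"
    using p(2) by (simp add: filter_mset_eq_conv)
  moreover have "(if b then insert 1 (Suc ` V) else Suc ` V) - {1} = Suc ` V"
    using p(3) by auto
  ultimately show ?thesis
    using p by (simp add: add_column_def remove_column_def multiset.map_comp image_image o_def)
qed

lemma add_column_in_overpartitions_in_box:
  assumes "p \<in> overpartitions_in_box L k'" "k' \<le> k" "b \<Longrightarrow> k' < k"
  shows "add_column k b p \<in> overpartitions_in_box (Suc L) k" "size (fst (add_column k b p)) = k"
  using assms by (cases p; auto simp: add_column_def mem_overpartitions_in_box)+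

lemma add_remove_column:
  assumes "(M, V) \<in> overpartitions_in_box L k" "size M = k"
  shows "add_column k (1 \<in> V) (remove_column (M, V)) = (M, V)"
    and "size (fst (remove_column (M, V))) + count M 1 = k"
proof -
  have pos: "\<forall>x\<in>#M. 0 < x" "V \<subseteq> set_mset M"
    using assms(1) by (auto simp: mem_overpartitions_in_box)
  define M' where "M' = image_mset (\<lambda>x. x - 1) (filter_mset (\<lambda>x. 1 < x) M)"
  define V' where "V' = (\<lambda>x. x - 1) ` (V - {1})"
  have rem: "remove_column (M, V) = (M', V')"
    by (simp add: remove_column_def M'_def V'_def)
  have "image_mset Suc M' = filter_mset (\<lambda>x. 1 < x) M"
    by (auto simp: M'_def multiset.map_comp o_def intro: image_mset_cong[where g=id, simplified])
  moreover have "filter_mset (\<lambda>x. \<not> 1 < x) M = filter_mset (\<lambda>x. x = 1) M"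
    using pos(1) by (intro filter_mset_cong) auto
  then have "filter_mset (\<lambda>x. \<not> 1 < x) M = replicate_mset (count M 1) 1"
    by (simp add: filter_eq_replicate_mset)
  ultimately have M: "M = image_mset Suc M' + replicate_mset (count M 1) 1"
    by (metis multiset_partition)
  show size: "size (fst (remove_column (M, V))) + count M 1 = k"
    using arg_cong[OF M, of size] assms(2) rem by simp
  have "Suc (x - 1) = x" if "x \<in> V" for x
    using pos that by auto
  then have "Suc ` V' = V - {1}"
    by (simp add: V'_def image_image)
  then have "(if 1 \<in> V then insert 1 (Suc ` V') else Suc ` V') = V"
    by auto
  moreover have "k - size M' = count M 1"
    using size rem by simp
  ultimately show "add_column k (1 \<in> V) (remove_column (M, V)) = (M, V)"
    using M by (simp add: rem add_column_def)
qed

lemma remove_column_in_overpartitions_in_box: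
  assumes "p \<in> overpartitions_in_box (Suc L) k"
  shows "remove_column p \<in> overpartitions_in_box L k"
proof -
  obtain M V where p: "p = (M, V)" "\<forall>x\<in>#M. 0 < x \<and> x \<le> Suc L" "size M \<le> k" "V \<subseteq> set_mset M"
    using assms by (cases p) (auto simp: mem_overpartitions_in_box)
  let ?M' = "filter_mset (\<lambda>x. 1 < x) M"
  have "size ?M' \<le> k"
    using p(3) size_filter_mset_lesseq order_trans by blast
  moreover have "\<forall>x\<in>#image_mset (\<lambda>x. x - 1) ?M'. 0 < x \<and> x \<le> L"
    using p(2) by auto
  moreover have "v - 1 \<in># image_mset (\<lambda>x. x - 1) ?M'" if "v \<in> V - {1}" for v
  proof -
    have "v \<in># ?M'" using p(2,4) that by fastforce
    then show ?thesis by simp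
  qed
  moreover have "remove_column p = (image_mset (\<lambda>x. x - 1) ?M', (\<lambda>x. x - 1) ` (V - {1}))"
    using p(1) by (simp add: remove_column_def)
  ultimately show ?thesis
    by (simp only: mem_overpartitions_in_box) auto
qed

lemma overpartitions_in_box_Suc_Suc:
  "overpartitions_in_box (Suc L) (Suc k) =
     overpartitions_in_box (Suc L) k
     \<union> add_column (Suc k) False ` overpartitions_in_box L (Suc k)
     \<union> add_column (Suc k) True ` overpartitions_in_box L k"
  (is "?B = ?B' \<union> ?F \<union> ?T")
proof (intro equalityI subsetI)
  fix p assume p: "p \<in> ?B"
  obtain M V where MV: "p = (M, V)" by fastforce
  show "p \<in> ?B' \<union> ?F \<union> ?T"
  proof (cases "size M = Suc k")
    case True
    let ?p' = "remove_column (M, V)"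
    have p': "add_column (Suc k) (1 \<in> V) ?p' = p" "size (fst ?p') + count M 1 = Suc k"
      using add_remove_column[OF p[unfolded MV] True] MV by auto
    have "?p' \<in> overpartitions_in_box L (Suc k)"
      using remove_column_in_overpartitions_in_box p MV by simp
    moreover have "?p' \<in> overpartitions_in_box L k" if "1 \<in> V"
    proof -
      have "1 \<in># M" using p MV that by (simp add: mem_overpartitions_in_box subset_iff)
      then have "0 < count M 1" by simp
      then have "size (fst ?p') \<le> k" using p'(2) by linarith
      then show ?thesis
        using \<open>?p' \<in> overpartitions_in_box L (Suc k)\<close>
        by (cases ?p') (simp add: mem_overpartitions_in_box)
    qed
    ultimately have "?p' \<in> overpartitions_in_box L (if 1 \<in> V then k else Suc k)"
      by simp
    then have "p \<in> add_column (Suc k) (1 \<in> V) ` overpartitions_in_box L (if 1 \<in> V then k else Suc k)"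
      by (rule image_eqI[of p "add_column (Suc k) (1 \<in> V)" ?p', OF p'(1)[symmetric]])
    then show ?thesis by (cases "1 \<in> V") simp_all
  next
    case False
    then have "p \<in> ?B'" using p MV by (simp add: mem_overpartitions_in_box)
    then show ?thesis by blast
  qed
next
  fix p assume "p \<in> ?B' \<union> ?F \<union> ?T"
  then show "p \<in> ?B"
  proof (elim UnE)
    assume "p \<in> ?B'"
    then show ?thesis by (cases p) (simp add: mem_overpartitions_in_box)
  next
    assume "p \<in> ?F"
    then obtain p0 where "p0 \<in> overpartitions_in_box L (Suc k)" "p = add_column (Suc k) False p0"
      by blast
    then show ?thesis using add_column_in_overpartitions_in_box(1) by simp
  next
    assume "p \<in> ?T"
    then obtain p0 where "p0 \<in> overpartitions_in_box L k" "p = add_column (Suc k) True p0"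
      by blast
    then show ?thesis using add_column_in_overpartitions_in_box(1)[of p0 L k "Suc k" True] by simp
  qed
qed

definition overpartition_weight :: "'a::comm_ring_1 \<Rightarrow> 'a \<Rightarrow> nat multiset \<times> nat set \<Rightarrow> 'a" where
  "overpartition_weight q t p = t ^ card (snd p) * q ^ sum_mset (fst p)"

lemma overpartition_weight_add_column:
  assumes "p \<in> overpartitions_in_box L k'" "k' \<le> k"
  shows "overpartition_weight q t (add_column k b p) = (if b then t else 1) * q ^ k * overpartition_weight q t p"
proof -
  obtain M V where p: "p = (M, V)" "size M \<le> k" "0 \<notin> V" "finite V"
    using assms by (cases p) (auto simp: mem_overpartitions_in_box intro: finite_subset)
  have "sum_mset (image_mset Suc M) = sum_mset M + size M"
    by (induction M) auto
  then have "sum_mset (fst (add_column k b p)) = sum_mset M + k"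
    using p by (simp add: add_column_def)
  moreover have "1 \<notin> Suc ` V"
    using p(3) by auto
  then have "card (snd (add_column k b p)) = (if b then Suc (card V) else card V)"
    using p by (simp add: add_column_def card_image)
  ultimately show ?thesis
    using p by (simp add: overpartition_weight_def power_add mult_ac)
qed

definition overpartition_box_gf :: "nat \<Rightarrow> nat \<Rightarrow> 'a::comm_ring_1 \<Rightarrow> 'a \<Rightarrow> 'a" where
  "overpartition_box_gf L k q t = (\<Sum>p\<in>overpartitions_in_box L k. overpartition_weight q t p)"

lemma overpartition_box_gf_0_left: "overpartition_box_gf 0 k q t = 1"
  by (simp add: overpartition_box_gf_def overpartitions_in_box_0_left overpartition_weight_def)

lemma overpartition_box_gf_0_right: "overpartition_box_gf L 0 q t = 1"
  by (simp add: overpartition_box_gf_def overpartitions_in_box_0_right overpartition_weight_def)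

lemma sum_overpartition_weight_add_column:
  assumes "k' \<le> k"
  shows "(\<Sum>p\<in>add_column k b ` overpartitions_in_box L k'. overpartition_weight q t p)
           = (if b then t else 1) * q ^ k * overpartition_box_gf L k' q t"
proof -
  have "inj_on (add_column k b) (overpartitions_in_box L k')"
    by (rule inj_on_inverseI[of _ remove_column]) (rule remove_add_column)
  then show ?thesis
    using assms by (simp add: sum.reindex overpartition_weight_add_column overpartition_box_gf_def
        sum_distrib_left)
qed

lemma overpartition_box_gf_Suc_Suc:
  "overpartition_box_gf (Suc L) (Suc k) q t =
     overpartition_box_gf (Suc L) k q t
     + q ^ Suc k * (overpartition_box_gf L (Suc k) q t + t * overpartition_box_gf L k q t)"
proof -
  let ?B' = "overpartitions_in_box (Suc L) k"
  let ?F = "add_column (Suc k) False ` overpartitions_in_box L (Suc k)"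
  let ?T = "add_column (Suc k) True ` overpartitions_in_box L k"
  have "size (fst p) = Suc k" if "p \<in> ?F \<union> ?T" for p
    using that
  proof (elim UnE imageE)
    fix p0 assume "p = add_column (Suc k) False p0" "p0 \<in> overpartitions_in_box L (Suc k)"
    then show ?thesis using add_column_in_overpartitions_in_box(2)[of p0 L "Suc k" "Suc k"] by simp
  next
    fix p0 assume "p = add_column (Suc k) True p0" "p0 \<in> overpartitions_in_box L k"
    then show ?thesis using add_column_in_overpartitions_in_box(2)[of p0 L k "Suc k"] by simp
  qed
  moreover have "size (fst p) \<le> k" if "p \<in> ?B'" for p
    using that by (cases p) (simp add: mem_overpartitions_in_box)
  ultimately have disj_B': "?B' \<inter> (?F \<union> ?T) = {}"
    by (metis disjoint_iff not_less_eq_eq order_refl)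
  have "1 \<notin> snd (add_column (Suc k) False p)" if "p \<in> overpartitions_in_box L (Suc k)" for p
    using that by (cases p) (auto simp: add_column_def mem_overpartitions_in_box)
  moreover have "1 \<in> snd (add_column (Suc k) True p)" for p
    by (cases p) (simp add: add_column_def)
  ultimately have disj_FT: "?F \<inter> ?T = {}"
    by (metis (no_types, lifting) disjoint_iff imageE)
  have "overpartition_box_gf (Suc L) (Suc k) q t = (\<Sum>p\<in>?B' \<union> (?F \<union> ?T). overpartition_weight q t p)"
    by (simp add: overpartition_box_gf_def overpartitions_in_box_Suc_Suc Un_assoc)
  also have "\<dots> = overpartition_box_gf (Suc L) k q t
      + ((\<Sum>p\<in>?F. overpartition_weight q t p) + (\<Sum>p\<in>?T. overpartition_weight q t p))"
    using disj_B' disj_FT finite_overpartitions_in_box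
    by (simp add: sum.union_disjoint overpartition_box_gf_def)
  finally show ?thesis
    by (simp add: sum_overpartition_weight_add_column algebra_simps)
qed


lemma over_qbinom_eq_overpartition_box_gf:
  "over_qbinom a b q t = (if b \<le> a then overpartition_box_gf (a - b) b q t else 0)"
  by (simp add: over_qbinom_def overpartition_box_gf_def overpartition_weight_def)

lemma over_qbinom_Suc_Suc:
  "over_qbinom (Suc (Suc a)) (Suc b) q t =
     over_qbinom (Suc a) b q t + q ^ Suc b * (over_qbinom (Suc a) (Suc b) q t + t * over_qbinom a b q t)"
proof (cases "b \<le> a")
  case True
  then have "Suc (Suc a) - Suc b = Suc (a - b)" "Suc a - b = Suc (a - b)" by auto
  with True show ?thesis
    by (simp add: over_qbinom_eq_overpartition_box_gf overpartition_box_gf_Suc_Suc)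
next
  case False
  then show ?thesis
    by (cases "b = Suc a") (simp_all add: over_qbinom_eq_overpartition_box_gf overpartition_box_gf_0_left)
qed

lemma qpoch_Suc: "qpoch x q (Suc k) = qpoch x q k * (1 - x * q ^ k)"
  by (simp add: qpoch_def)

lemma qpoch_Suc_shift: "qpoch x q (Suc k) = (1 - x) * qpoch (x * q) q k"
  by (simp add: qpoch_def prod.lessThan_Suc_shift mult.assoc del: prod.lessThan_Suc)

lemma qpoch_1: "qpoch x q 1 = 1 - x"
  by (simp add: qpoch_def)

lemma qpoch_eq_0_iff: "qpoch (x::'a::field) q n = 0 \<longleftrightarrow> (\<exists>k<n. x * q ^ k = 1)"
  by (auto simp: qpoch_def)

definition qpoch_ratio :: "'a::field \<Rightarrow> 'a \<Rightarrow> 'a \<Rightarrow> nat \<Rightarrow> 'a" where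
  "qpoch_ratio t y q k = qpoch (- t * y * q) q k / qpoch (y * q) q k"

lemma qpoch_ratio_0 [simp]: "qpoch_ratio t y q 0 = 1"
  by (simp add: qpoch_ratio_def qpoch_def)

lemma qpoch_ratio_Suc_shift:
  "qpoch_ratio t y q (Suc k) = qpoch_ratio t y q 1 * qpoch_ratio t (y * q) q k"
  unfolding qpoch_ratio_def qpoch_Suc_shift by (simp add: qpoch_1[unfolded One_nat_def] mult.assoc)

lemma qpoch_ratio_Suc:
  assumes "1 - y * q ^ Suc k \<noteq> 0"
  shows "qpoch_ratio t y q (Suc k)
           = qpoch_ratio t y q k + y * q ^ Suc k * (qpoch_ratio t y q (Suc k) + t * qpoch_ratio t y q k)"
proof -
  define Y where "Y = y * q ^ Suc k"
  define r where "r = qpoch_ratio t y q k"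
  have "1 - Y \<noteq> 0"
    using assms by (simp add: Y_def)
  moreover have "qpoch_ratio t y q (Suc k) = r * (1 + t * Y) / (1 - Y)"
    by (simp add: qpoch_ratio_def qpoch_Suc r_def Y_def mult_ac)
  ultimately have "qpoch_ratio t y q (Suc k) = r + Y * (qpoch_ratio t y q (Suc k) + t * r)"
    by (simp add: field_simps)
  then show ?thesis
    by (simp add: Y_def r_def)
qed

definition S_summand :: "nat \<Rightarrow> 'a::field \<Rightarrow> 'a \<Rightarrow> 'a \<Rightarrow> nat \<Rightarrow> 'a" where
  "S_summand n t y q j = (if j = 0 then 1 else y ^ j * q ^ j\<^sup>2 *
     (t * over_qbinom (n - 1) (j - 1) q t * qpoch_ratio t y q (j - 1)
      + over_qbinom n j q t * qpoch_ratio t y q j))"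

lemma S_eq_sum_S_summand: "S n t y q = (\<Sum>j\<le>n. S_summand n t y q j)"
proof -
  have "{..n} = insert 0 {1..n}" by auto
  then have "(\<Sum>j\<le>n. S_summand n t y q j) = 1 + (\<Sum>j\<in>{1..n}. S_summand n t y q j)"
    by (simp add: S_summand_def)
  also have "\<dots> = S n t y q"
    unfolding S_def by (intro arg_cong[where f="(+) 1"] sum.cong) (auto simp: S_summand_def qpoch_ratio_def algebra_simps)
  finally show ?thesis ..
qed

lemma over_qbinom_0_right: "over_qbinom a 0 q t = 1"
  by (simp add: over_qbinom_eq_overpartition_box_gf overpartition_box_gf_0_right)

lemma over_qbinom_self: "over_qbinom a a q t = 1"
  by (simp add: over_qbinom_eq_overpartition_box_gf overpartition_box_gf_0_left)

definition S_carry :: "nat \<Rightarrow> 'a::field \<Rightarrow> 'a \<Rightarrow> 'a \<Rightarrow> nat \<Rightarrow> 'a" where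
  "S_carry N t y q j = (if j = 0 then 0 else y ^ j * q ^ j\<^sup>2 * over_qbinom N (j - 1) q t *
     (qpoch_ratio t y q j + t * qpoch_ratio t y q (j - 1)))"

lemma S_carry_0: "S_carry N t y q 0 = 0"
  by (simp add: S_carry_def)

lemma S_summand_Suc_self: "S_summand (Suc N) t y q (Suc N) = S_carry N t y q (Suc N)"
  by (simp add: S_summand_def S_carry_def over_qbinom_self algebra_simps)

lemma qpoch_ratio_1_mult_S_summand:
  "qpoch_ratio t y q 1 * S_summand N t (y * q) q (Suc i)
     = y ^ Suc i * q ^ (Suc i * Suc (Suc i))
       * (t * over_qbinom (N - 1) i q t * qpoch_ratio t y q (Suc i)
          + over_qbinom N (Suc i) q t * qpoch_ratio t y q (Suc (Suc i)))"
proof -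
  define r where "r = qpoch_ratio t y q"
  have "(y * q) ^ Suc i * q ^ (Suc i)\<^sup>2 = y ^ Suc i * q ^ (Suc i * Suc (Suc i))"
    by (simp add: power2_eq_square power_mult_distrib power_add[symmetric] algebra_simps)
  moreover have "r 1 * S_summand N t (y * q) q (Suc i) = (y * q) ^ Suc i * q ^ (Suc i)\<^sup>2
      * (t * over_qbinom (N - 1) i q t * (r 1 * qpoch_ratio t (y * q) q i)
         + over_qbinom N (Suc i) q t * (r 1 * qpoch_ratio t (y * q) q (Suc i)))"
    by (simp add: S_summand_def algebra_simps)
  ultimately show ?thesis
    by (simp only: r_def qpoch_ratio_Suc_shift[symmetric])
qed

lemma S_summand_minus_S_carry:
  "S_summand (Suc N) t y q (Suc i) - S_carry N t y q (Suc i)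
     = y ^ Suc i * q ^ (Suc i)\<^sup>2 * (over_qbinom (Suc N) (Suc i) q t - over_qbinom N i q t)
       * qpoch_ratio t y q (Suc i)"
  by (simp add: S_summand_def S_carry_def algebra_simps)

lemma S_summand_shift:
  assumes "j \<le> N" "1 - y * q ^ Suc j \<noteq> 0"
  shows "qpoch_ratio t y q 1 * S_summand N t (y * q) q j
           = S_summand (Suc N) t y q j - S_carry N t y q j + S_carry N t y q (Suc j)"
proof (cases j)
  case 0
  then show ?thesis
    using qpoch_ratio_Suc[of y q 0 t] assms(2)
    by (simp add: S_summand_def S_carry_def over_qbinom_0_right)
next
  case (Suc i)
  obtain a where N: "N = Suc a"
    using assms(1) Suc by (cases N) auto
  define r where "r = qpoch_ratio t y q"
  define B0 where "B0 = over_qbinom a i q t"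
  define B1 where "B1 = over_qbinom N (Suc i) q t"
  define c where "c = y ^ Suc i * q ^ (Suc i * Suc (Suc i))"
  have r_step: "r (Suc (Suc i)) = r (Suc i) + y * q ^ Suc (Suc i) * (r (Suc (Suc i)) + t * r (Suc i))"
    unfolding r_def using qpoch_ratio_Suc assms(2) Suc by blast
  have lhs: "r 1 * S_summand N t (y * q) q j = c * (t * B0 * r (Suc i) + B1 * r (Suc (Suc i)))"
    using qpoch_ratio_1_mult_S_summand[of t y q N i] by (simp add: Suc N r_def B0_def B1_def c_def)
  have "S_summand (Suc N) t y q j - S_carry N t y q j
          = y ^ Suc i * q ^ (Suc i)\<^sup>2 * (q ^ Suc i * (B1 + t * B0)) * r (Suc i)"
    using S_summand_minus_S_carry[of N t y q i] over_qbinom_Suc_Suc[of a i q t]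
    by (simp add: Suc N r_def B0_def B1_def)
  also have "\<dots> = c * (B1 + t * B0) * r (Suc i)"
    by (simp add: c_def power2_eq_square power_add[symmetric] algebra_simps)
  finally have diff: "S_summand (Suc N) t y q j - S_carry N t y q j = c * (B1 + t * B0) * r (Suc i)" .
  have "y ^ Suc (Suc i) * q ^ (Suc (Suc i))\<^sup>2 = c * y * q ^ Suc (Suc i)"
    by (simp add: c_def power2_eq_square power_add[symmetric] algebra_simps)
  then have carry: "S_carry N t y q (Suc j) = c * y * q ^ Suc (Suc i) * B1 * (r (Suc (Suc i)) + t * r (Suc i))"
    using Suc by (auto simp: S_carry_def B1_def r_def[symmetric] mult_ac)
  have "c * (t * B0 * r (Suc i) + B1 * r (Suc (Suc i)))
          = c * (B1 + t * B0) * r (Suc i) + c * y * q ^ Suc (Suc i) * B1 * (r (Suc (Suc i)) + t * r (Suc i))"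
    by (subst (1) r_step) (simp add: algebra_simps)
  then show ?thesis
    unfolding r_def[symmetric] lhs diff[symmetric] carry by simp
qed

lemma S_Suc:
  assumes "qpoch (y * q) q (Suc N) \<noteq> 0"
  shows "S (Suc N) t y q = qpoch_ratio t y q 1 * S N t (y * q) q"
proof -
  have "S_summand (Suc N) t y q j = qpoch_ratio t y q 1 * S_summand N t (y * q) q j
          + (S_carry N t y q j - S_carry N t y q (Suc j))" if "j \<le> N" for j
  proof -
    have "1 - y * q ^ Suc j \<noteq> 0"
      using assms that by (auto simp: qpoch_eq_0_iff mult.assoc)
    from S_summand_shift[OF that this, of t] show ?thesis
      by (simp add: algebra_simps)
  qed
  then have "(\<Sum>j\<le>N. S_summand (Suc N) t y q j)
      = (\<Sum>j\<le>N. qpoch_ratio t y q 1 * S_summand N t (y * q) q j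
                  + (S_carry N t y q j - S_carry N t y q (Suc j)))"
    by simp
  also have "\<dots> = qpoch_ratio t y q 1 * S N t (y * q) q - S_carry N t y q (Suc N)"
    by (simp add: sum.distrib sum_telescope S_eq_sum_S_summand sum_distrib_left S_carry_0)
  finally show ?thesis
    by (simp add: S_eq_sum_S_summand S_summand_Suc_self)
qed

lemma S_eq_qpoch_ratio:
  assumes "qpoch (y * q) q n \<noteq> 0"
  shows "S n t y q = qpoch_ratio t y q n"
  using assms
proof (induction n arbitrary: y)
  case 0
  then show ?case by (simp add: S_def)
next
  case (Suc N)
  then have "qpoch (y * q * q) q N \<noteq> 0"
    by (simp add: qpoch_Suc_shift)
  with Suc show ?case
    by (simp add: S_Suc qpoch_ratio_Suc_shift[of t y q N])
qed

theorem theorem3p4: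
  fixes n :: nat and t y q :: "'a::field"
  assumes "1 \<le> n"
    and "qpoch (y * q) q n \<noteq> 0"
  shows "S n t y q = qpoch (- t * y * q) q n / qpoch (y * q) q n"
  using S_eq_qpoch_ratio[OF assms(2)] by (simp add: qpoch_ratio_def)

end
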